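(* Let $\mathcal{X}\subseteq\mathbb{R}^d$ be nonempty, closed and convex, let $f:\mathbb{R}^d\to\mathbb{R}$ be convex, and let $\mathcal{X}_\star:=\operatorname{arg\,min}_{x\in\mathcal{X}}f(x)$. Let $x_k\in\mathcal{X}$ and $x_\star\in\mathcal{X}_\star$. Assume $g_k\in\partial f(x_k)$, $0\notin\partial f(x_k)$, and $0<t_k\le\frac{\langle g_k,x_k-x_\star\rangle}{\|g_k\|}$. Let $x_{k+1}\in\operatorname{arg\,min}_{z\in\mathcal{X}\cap\mathcal{B}(x_k,t_k)}\langle g_k,z\rangle$. Then $\|x_k-x_\star\|\ge t_k$, $\|x_{k+1}-x_k\|=t_k$, and $\|x_{k+1}-x_\star\|^2\le\|x_k-x_\star\|^2-t_k^2$.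
   Context: $\partial f(x)$ is the convex subdifferential. $\|\cdot\|$ is the Euclidean norm, $\mathcal{B}(x,t):=\{y:\|y-x\|\le t\}$. *)

theory Defs
  imports "HOL-Analysis.Analysis"
begin

definition subdifferential :: "('a::real_inner \<Rightarrow> real) \<Rightarrow> 'a \<Rightarrow> 'a set" where
  "subdifferential f x = {g. \<forall>y. f y \<ge> f x + inner g (y - x)}"

definition argmin_on :: "('a \<Rightarrow> real) \<Rightarrow> 'a set \<Rightarrow> 'a set" where
  "argmin_on f S = {x \<in> S. \<forall>y\<in>S. f x \<le> f y}"

end

theory Submission
  imports Defs
begin

text \<open>Put \<open>u = x\<^sub>k\<^sub>+\<^sub>1 - x\<^sub>k\<close> and \<open>v = x\<^sub>\<star> - x\<^sub>k\<close>; the step-size condition says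
  \<open>\<langle>g, v\<rangle> \<le> -t \<parallel>g\<parallel>\<close>, which with Cauchy-Schwarz gives \<open>t \<le> \<parallel>v\<parallel>\<close>.
  If \<open>\<parallel>u\<parallel> < t\<close> or \<open>\<langle>u, v - u\<rangle> < 0\<close>, a short move from \<open>x\<^sub>k\<^sub>+\<^sub>1\<close> towards \<open>x\<^sub>\<star>\<close>
  stays in \<open>X \<inter> \<B>(x\<^sub>k, t)\<close>, so optimality gives \<open>\<langle>g, u\<rangle> \<le> \<langle>g, v\<rangle> \<le> -t \<parallel>g\<parallel>\<close>.
  By the equality case of Cauchy-Schwarz, \<open>u = -t g / \<parallel>g\<parallel>\<close>, and then \<open>\<parallel>u\<parallel> = t\<close>
  and \<open>\<langle>u, v\<rangle> \<ge> t\<^sup>2\<close> after all. These two facts are the claim, since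
  \<open>\<parallel>u - v\<parallel>\<^sup>2 = \<parallel>u\<parallel>\<^sup>2 - 2\<langle>u, v\<rangle> + \<parallel>v\<parallel>\<^sup>2\<close>.\<close>

lemma quadratic_le_for_small_pos:
  fixes c b q t :: real
  assumes "c \<le> t\<^sup>2" and "q > 0" and "c < t\<^sup>2 \<or> b < 0"
  shows "\<exists>s. 0 < s \<and> s \<le> 1 \<and> c + 2 * s * b + s\<^sup>2 * q \<le> t\<^sup>2"
proof (cases "b < 0")
  case True
  define s where "s = min 1 (-2 * b / q)"
  have s: "0 < s" "s \<le> 1" using True assms by (auto simp: s_def divide_neg_pos)
  have "s * q \<le> -2 * b" using assms True by (auto simp: s_def min_def field_simps)
  then have "s * (2 * b + s * q) \<le> 0" using s by (simp add: mult_nonneg_nonpos)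
  then have "c + 2 * s * b + s\<^sup>2 * q \<le> c" by (simp add: power2_eq_square algebra_simps)
  then show ?thesis using s assms by fastforce
next
  case False
  then have "c < t\<^sup>2" and bq: "2 * b + q > 0" using assms by auto
  define s where "s = min 1 ((t\<^sup>2 - c) / (2 * b + q))"
  have s: "0 < s" "s \<le> 1" using \<open>c < t\<^sup>2\<close> bq by (auto simp: s_def)
  have "s \<le> (t\<^sup>2 - c) / (2 * b + q)" by (simp add: s_def)
  then have "s * (2 * b + q) \<le> t\<^sup>2 - c" using bq by (simp add: pos_le_divide_eq)
  moreover have "s\<^sup>2 * q \<le> s * q" using s assms
    by (simp add: power2_eq_square mult_right_le_one_le)
  ultimately have "c + 2 * s * b + s\<^sup>2 * q \<le> t\<^sup>2" by (simp add: algebra_simps)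
  then show ?thesis using s by blast
qed

lemma segment_enters_cball:
  fixes a y z :: "'a::real_inner"
  assumes "dist a z \<le> t" and "dist a z < t \<or> inner (z - a) (y - z) < 0"
  shows "\<exists>s. 0 < s \<and> s \<le> 1 \<and> dist a (z + s *\<^sub>R (y - z)) \<le> t"
proof (cases "y = z")
  case True
  then show ?thesis using assms(1) by (intro exI[of _ 1]) simp
next
  case False
  have t: "0 \<le> t" using assms(1) zero_le_dist order_trans by blast
  have "(norm (z - a))\<^sup>2 \<le> t\<^sup>2" "(norm (z - a))\<^sup>2 < t\<^sup>2 \<or> inner (z - a) (y - z) < 0"
    using assms by (auto simp: dist_norm norm_minus_commute intro: power_mono power_strict_mono)
  moreover have "(norm (y - z))\<^sup>2 > 0" using False by simp
  ultimately obtain s where s: "0 < s" "s \<le> 1"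
    "(norm (z - a))\<^sup>2 + 2 * s * inner (z - a) (y - z) + s\<^sup>2 * (norm (y - z))\<^sup>2 \<le> t\<^sup>2"
    using quadratic_le_for_small_pos by blast
  have "(norm (z + s *\<^sub>R (y - z) - a))\<^sup>2
      = (norm (z - a))\<^sup>2 + 2 * s * inner (z - a) (y - z) + s\<^sup>2 * (norm (y - z))\<^sup>2"
    unfolding power2_norm_eq_inner
    by (simp add: inner_add_left inner_add_right inner_diff_left inner_diff_right
        power2_eq_square algebra_simps inner_commute)
  then have "(norm (z + s *\<^sub>R (y - z) - a))\<^sup>2 \<le> t\<^sup>2" using s by simp
  then have "norm (z + s *\<^sub>R (y - z) - a) \<le> t" using t by (rule power2_le_imp_le)
  then show ?thesis using s by (auto simp: dist_norm norm_minus_commute)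
qed

lemma argmin_inner_le_along_segment:
  fixes C :: "'a::real_inner set"
  assumes "convex C" and "y \<in> C" and z: "z \<in> argmin_on (inner g) (C \<inter> cball a t)"
    and "dist a z < t \<or> inner (z - a) (y - z) < 0"
  shows "inner g z \<le> inner g y"
proof -
  have "z \<in> C" "dist a z \<le> t" using z by (auto simp: argmin_on_def)
  then obtain s where s: "0 < s" "s \<le> 1" and w: "dist a (z + s *\<^sub>R (y - z)) \<le> t"
    using segment_enters_cball assms(4) by blast
  have "z + s *\<^sub>R (y - z) = (1 - s) *\<^sub>R z + s *\<^sub>R y" by (simp add: algebra_simps)
  then have "z + s *\<^sub>R (y - z) \<in> C"
    using \<open>convex C\<close> \<open>z \<in> C\<close> \<open>y \<in> C\<close> s by (simp add: convex_def)
  then have "inner g z \<le> inner g (z + s *\<^sub>R (y - z))"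
    using z w by (auto simp: argmin_on_def)
  then have "0 \<le> s * inner g (y - z)" by (simp add: inner_add_right)
  then show ?thesis using s by (simp add: zero_le_mult_iff inner_diff_right)
qed

lemma cball_inner_minimizer_unique:
  fixes g u :: "'a::real_inner"
  assumes "g \<noteq> 0" and "norm u \<le> t" and "inner g u \<le> - t * norm g"
  shows "u = - (t / norm g) *\<^sub>R g"
proof -
  have lower: "norm g * t \<le> inner (- g) u" using assms(3) by (simp add: algebra_simps)
  have upper: "inner (- g) u \<le> norm (- g) * norm u" by (rule norm_cauchy_schwarz)
  have "norm g * t \<le> norm g * norm u" using lower upper by simp
  then have "norm u = t" using assms(1,2) by simp
  moreover have "inner (- g) u = norm (- g) * norm u" using lower upper \<open>norm u = t\<close> by simp
  then have "norm (- g) *\<^sub>R u = norm u *\<^sub>R (- g)" by (rule norm_cauchy_schwarz_eq[THEN iffD1])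
  ultimately have "norm g *\<^sub>R u = - t *\<^sub>R g" by simp
  then have "inverse (norm g) *\<^sub>R norm g *\<^sub>R u = - (t / norm g) *\<^sub>R g"
    by (simp add: divide_inverse mult.commute)
  then show ?thesis using assms(1) by simp
qed

lemma argmin_inner_cball_toward_far_point:
  fixes C :: "'a::real_inner set"
  assumes "convex C" and "y \<in> C" and z: "z \<in> argmin_on (inner g) (C \<inter> cball a t)"
    and "g \<noteq> 0" and gy: "inner g (y - a) \<le> - t * norm g"
  shows "norm (z - a) = t \<and> t\<^sup>2 \<le> inner (z - a) (y - a)"
proof (rule ccontr)
  assume contra: "\<not> ?thesis"
  have "norm (z - a) \<le> t" using z by (auto simp: argmin_on_def dist_norm norm_minus_commute)
  have "dist a z < t \<or> inner (z - a) (y - z) < 0"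
  proof (cases "norm (z - a) = t")
    case True
    then have "inner (z - a) (y - a) < inner (z - a) (z - a)"
      using contra by (simp flip: power2_norm_eq_inner)
    then show ?thesis by (simp add: inner_diff_right)
  qed (use \<open>norm (z - a) \<le> t\<close> in \<open>auto simp: dist_norm norm_minus_commute\<close>)
  then have "inner g (z - a) \<le> inner g (y - a)"
    using argmin_inner_le_along_segment[OF assms(1,2) z] by (simp add: inner_diff_right)
  then have u: "z - a = - (t / norm g) *\<^sub>R g"
    using cball_inner_minimizer_unique \<open>g \<noteq> 0\<close> \<open>norm (z - a) \<le> t\<close> gy by fastforce
  have t: "0 \<le> t" using \<open>norm (z - a) \<le> t\<close> norm_ge_zero order_trans by blast
  have "t\<^sup>2 = (t / norm g) * (t * norm g)" using \<open>g \<noteq> 0\<close> by (simp add: power2_eq_square)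
  also have "\<dots> \<le> (t / norm g) * - inner g (y - a)"
    using gy t by (intro mult_left_mono) auto
  also have "\<dots> = inner (z - a) (y - a)" by (simp add: u)
  finally show False
    using contra u \<open>g \<noteq> 0\<close> t by simp
qed

theorem proposition7:
  fixes X :: "(real ^ 'd) set" and f :: "real ^ 'd \<Rightarrow> real"
    and xk xs gk xk1 :: "real ^ 'd" and tk :: real
  assumes "X \<noteq> {}" and "closed X" and "convex X"
    and "convex_on UNIV f"
    and "xk \<in> X" and "xs \<in> argmin_on f X"
    and "gk \<in> subdifferential f xk" and "0 \<notin> subdifferential f xk"
    and "0 < tk" and "tk \<le> inner gk (xk - xs) / norm gk"
    and "xk1 \<in> argmin_on (\<lambda>z. inner gk z) (X \<inter> cball xk tk)"
  shows "norm (xk - xs) \<ge> tk \<and> norm (xk1 - xk) = tk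
    \<and> (norm (xk1 - xs))\<^sup>2 \<le> (norm (xk - xs))\<^sup>2 - tk\<^sup>2"
proof -
  have "gk \<noteq> 0" using assms(7,8) by auto
  have "xs \<in> X" using assms(6) by (simp add: argmin_on_def)
  have gv: "inner gk (xs - xk) \<le> - tk * norm gk"
    using assms(10) \<open>gk \<noteq> 0\<close> by (simp add: field_simps inner_diff_right)
  have "tk * norm gk \<le> norm gk * norm (xs - xk)"
    using gv norm_cauchy_schwarz[of "- gk" "xs - xk"] by simp
  then have far: "tk \<le> norm (xk - xs)"
    using \<open>gk \<noteq> 0\<close> by (simp add: norm_minus_commute mult.commute)
  have step: "norm (xk1 - xk) = tk \<and> tk\<^sup>2 \<le> inner (xk1 - xk) (xs - xk)"
    using argmin_inner_cball_toward_far_point[OF assms(3) \<open>xs \<in> X\<close> _ \<open>gk \<noteq> 0\<close> gv] assms(11)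
    by simp
  have "(norm (xk1 - xs))\<^sup>2
      = (norm (xk1 - xk))\<^sup>2 + (norm (xs - xk))\<^sup>2 - 2 * inner (xk1 - xk) (xs - xk)"
    using dot_norm_neg[of "xk1 - xk" "xs - xk"] by simp
  then show ?thesis using far step by (simp add: norm_minus_commute)
qed

end
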